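(* In the setting of the context, assume $\Pi^\rho_0=\{\mathbf{0}\}$ and that Condition I holds ($ZR^i\in L^1$ for all $i\in\{1,\dots,d\}$ and all $Z\in\mathcal{Q}$). If $\mathcal{Q}\cap\mathcal{M}=\emptyset$, then the market admits $\rho$-arbitrage.
   Context: Let $(\Omega,\mathcal{F},\mathbb{P})$ be a probability space and a market: riskless asset $S^0_0=1$, $S^0_1=1+r$, $r>-1$; risky assets $S^1,\dots,S^d$ with constants $S^i_0>0$ and real-valued $\mathcal{F}$-measurable $S^i_1$; returns $R^i:=(S^i_1-S^i_0)/S^i_0$. Standing assumptions: nonredundancy (if $\theta\in\mathbb{R}^{1+d}$ with $\sum_{i=0}^d\theta^iS^i_t=0$ a.s. for $t\in\{0,1\}$ then $\theta=0$), $R^i\in L^1$, $\mathbb{E}[R^i]\ne r$ for some $i$. Excess return: $X_\pi:=\pi\cdot(R-r\mathbf{1})$; $\Pi_0:=\{\pi:\mathbb{E}[X_\pi]=0\}$. $L$ is a Riesz space with $L^\infty\subset L\subset L^1$ containing all $X_\pi$. $\mathcal{D}:=\{Z\in L^1:Z\ge0,\mathbb{E}[Z]=1\}$; $\mathcal{Q}\subset\mathcal{D}$ is convex with $1\in\mathcal{Q}$ and $\rho(X)=\sup_{Z\in\mathcal{Q}}\mathbb{E}[-ZX]$ on $L$, with $\mathbb{E}[-ZX]:=\mathbb{E}[ZX^-]-\mathbb{E}[ZX^+]$ and $\mathbb{E}[-ZX]=\infty$ if $\mathbb{E}[ZX^-]=\infty$. $\Pi^\rho_0$ is the set of $\pi\in\Pi_0$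 with $\rho(X_\pi)<\infty$ and $\rho(X_\pi)\le\rho(X_{\pi'})$ for all $\pi'\in\Pi_0$. $\mathcal{M}:=\{Z\in\mathcal{D}:\mathbb{E}[Z(R^i-r)]=0\ \forall i\}$. $\pi$ is $\rho$-efficient if $\mathbb{E}[X_\pi]\ge0$ and no $\pi'$ has $\mathbb{E}[X_{\pi'}]\ge\mathbb{E}[X_\pi]$, $\rho(X_{\pi'})\le\rho(X_\pi)$ with one inequality strict; $\rho$-arbitrage means no $\rho$-efficient portfolio exists. *)

theory Defs
  imports "HOL-Probability.Probability"
begin

text \<open>One-period market. Risky assets are indexed by a finite type 'd
  (so d = CARD('d)); the riskless asset is treated separately.\<close>

definition ret :: "('d \<Rightarrow> real) \<Rightarrow> ('d \<Rightarrow> 'a \<Rightarrow> real) \<Rightarrow> 'd \<Rightarrow> 'a \<Rightarrow> real" where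
  "ret S0 S1 i \<omega> = (S1 i \<omega> - S0 i) / S0 i"

definition excess :: "real \<Rightarrow> ('d::finite \<Rightarrow> 'a \<Rightarrow> real) \<Rightarrow> ('d \<Rightarrow> real) \<Rightarrow> 'a \<Rightarrow> real" where
  "excess r R \<pi> \<omega> = (\<Sum>i\<in>UNIV. \<pi> i * (R i \<omega> - r))"

definition nonredundant :: "'a measure \<Rightarrow> real \<Rightarrow> ('d::finite \<Rightarrow> real) \<Rightarrow> ('d \<Rightarrow> 'a \<Rightarrow> real) \<Rightarrow> bool" where
  "nonredundant M r S0 S1 \<longleftrightarrow>
     (\<forall>(\<theta>0::real) (\<theta>::'d \<Rightarrow> real).
        (\<theta>0 * 1 + (\<Sum>i\<in>UNIV. \<theta> i * S0 i) = 0 \<and>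
         (AE \<omega> in M. \<theta>0 * (1 + r) + (\<Sum>i\<in>UNIV. \<theta> i * S1 i \<omega>) = 0))
        \<longrightarrow> \<theta>0 = 0 \<and> (\<forall>i. \<theta> i = 0))"

definition densities :: "'a measure \<Rightarrow> ('a \<Rightarrow> real) set" where
  "densities M = {Z. integrable M Z \<and> (AE \<omega> in M. Z \<omega> \<ge> 0) \<and> integral\<^sup>L M Z = 1}"

definition convex_fun_set :: "('a \<Rightarrow> real) set \<Rightarrow> bool" where
  "convex_fun_set Q \<longleftrightarrow> (\<forall>Z1\<in>Q. \<forall>Z2\<in>Q. \<forall>t::real. 0 \<le> t \<and> t \<le> 1 \<longrightarrow>
       (\<lambda>\<omega>. t * Z1 \<omega> + (1 - t) * Z2 \<omega>) \<in> Q)"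

definition neg_expect :: "'a measure \<Rightarrow> ('a \<Rightarrow> real) \<Rightarrow> ('a \<Rightarrow> real) \<Rightarrow> ereal" where
  "neg_expect M Z X =
     (let a = (\<integral>\<^sup>+ \<omega>. ennreal (Z \<omega> * max 0 (- X \<omega>)) \<partial>M);
          b = (\<integral>\<^sup>+ \<omega>. ennreal (Z \<omega> * max 0 (X \<omega>)) \<partial>M)
      in if a = \<infinity> then \<infinity> else enn2ereal a - enn2ereal b)"

definition rho :: "'a measure \<Rightarrow> ('a \<Rightarrow> real) set \<Rightarrow> ('a \<Rightarrow> real) \<Rightarrow> ereal" where
  "rho M Q X = (SUP Z\<in>Q. neg_expect M Z X)"

definition Pi0 :: "'a measure \<Rightarrow> real \<Rightarrow> ('d::finite \<Rightarrow> 'a \<Rightarrow> real) \<Rightarrow> ('d \<Rightarrow> real) set" where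
  "Pi0 M r R = {\<pi>. integral\<^sup>L M (excess r R \<pi>) = 0}"

definition Pi0_rho :: "'a measure \<Rightarrow> ('a \<Rightarrow> real) set \<Rightarrow> real \<Rightarrow> ('d::finite \<Rightarrow> 'a \<Rightarrow> real) \<Rightarrow> ('d \<Rightarrow> real) set" where
  "Pi0_rho M Q r R = {\<pi> \<in> Pi0 M r R. rho M Q (excess r R \<pi>) < \<infinity> \<and>
      (\<forall>\<pi>'\<in>Pi0 M r R. rho M Q (excess r R \<pi>) \<le> rho M Q (excess r R \<pi>'))}"

definition emm :: "'a measure \<Rightarrow> real \<Rightarrow> ('d \<Rightarrow> 'a \<Rightarrow> real) \<Rightarrow> ('a \<Rightarrow> real) set" where
  "emm M r R = {Z \<in> densities M. \<forall>i. integrable M (\<lambda>\<omega>. Z \<omega> * (R i \<omega> - r)) \<and>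
                                     integral\<^sup>L M (\<lambda>\<omega>. Z \<omega> * (R i \<omega> - r)) = 0}"

definition rho_efficient :: "'a measure \<Rightarrow> ('a \<Rightarrow> real) set \<Rightarrow> real \<Rightarrow> ('d::finite \<Rightarrow> 'a \<Rightarrow> real) \<Rightarrow> ('d \<Rightarrow> real) \<Rightarrow> bool" where
  "rho_efficient M Q r R \<pi> \<longleftrightarrow>
     integral\<^sup>L M (excess r R \<pi>) \<ge> 0 \<and>
     \<not> (\<exists>\<pi>'. integral\<^sup>L M (excess r R \<pi>') \<ge> integral\<^sup>L M (excess r R \<pi>) \<and>
             rho M Q (excess r R \<pi>') \<le> rho M Q (excess r R \<pi>) \<and>
             (integral\<^sup>L M (excess r R \<pi>') > integral\<^sup>L M (excess r R \<pi>) \<or>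
              rho M Q (excess r R \<pi>') < rho M Q (excess r R \<pi>)))"

definition rho_arbitrage :: "'a measure \<Rightarrow> ('a \<Rightarrow> real) set \<Rightarrow> real \<Rightarrow> ('d::finite \<Rightarrow> 'a \<Rightarrow> real) \<Rightarrow> bool" where
  "rho_arbitrage M Q r R \<longleftrightarrow> \<not> (\<exists>\<pi>. rho_efficient M Q r R \<pi>)"

end

theory Submission
  imports Defs
begin

text \<open>For Z \<in> Q the functional \<pi> \<mapsto> E[-Z X_\<pi>] is linear, with coefficient vector
  m(Z) = (E[Z (R^i - r)])_i. These vectors form a convex set C in \<real>^d, and
  Q \<inter> \<M> = {} means exactly 0 \<notin> C. A separating hyperplane gives p \<noteq> 0 with
  p \<cdot> m(Z) \<ge> 0 for all Z \<in> Q, i.e. \<rho>(X_p) \<le> 0 and E[X_p] = p \<cdot> m(1) \<ge> 0.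
  If E[X_p] = 0, then p would be a second minimiser of \<rho> over \<Pi>_0, since
  \<rho>(X_\<pi>) \<ge> -E[X_\<pi>] = 0 on \<Pi>_0. Hence E[X_p] > 0, and adding p to any portfolio
  raises its expected excess return without raising its risk, so no portfolio
  is \<rho>-efficient.\<close>

lemma enn2ereal_eq_ereal_enn2real: "x \<noteq> \<infinity> \<Longrightarrow> enn2ereal x = ereal (enn2real x)"
  by (metis ennreal_enn2real_if enn2ereal_ennreal infinity_ennreal_def enn2real_nonneg)

lemma neg_expect_eq_integral:
  assumes "integrable M (\<lambda>\<omega>. Z \<omega> * X \<omega>)" and "AE \<omega> in M. Z \<omega> \<ge> 0"
  shows "neg_expect M Z X = ereal (- (\<integral>\<omega>. Z \<omega> * X \<omega> \<partial>M))"
proof -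
  define f where "f = (\<lambda>\<omega>. Z \<omega> * X \<omega>)"
  have neg: "(\<integral>\<^sup>+ \<omega>. ennreal (Z \<omega> * max 0 (- X \<omega>)) \<partial>M) = (\<integral>\<^sup>+ \<omega>. ennreal (- f \<omega>) \<partial>M)"
   and pos: "(\<integral>\<^sup>+ \<omega>. ennreal (Z \<omega> * max 0 (X \<omega>)) \<partial>M) = (\<integral>\<^sup>+ \<omega>. ennreal (f \<omega>) \<partial>M)"
    by (intro nn_integral_cong_AE, use assms(2) in eventually_elim,
        auto simp: f_def max_def ennreal_neg mult_nonneg_nonpos)+
  have "integrable M f"
    using assms(1) by (simp add: f_def)
  then have fin: "(\<integral>\<^sup>+ \<omega>. ennreal (- f \<omega>) \<partial>M) \<noteq> \<infinity>" "(\<integral>\<^sup>+ \<omega>. ennreal (f \<omega>) \<partial>M) \<noteq> \<infinity>"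
    and "integral\<^sup>L M f = enn2real (\<integral>\<^sup>+ \<omega>. ennreal (f \<omega>) \<partial>M) - enn2real (\<integral>\<^sup>+ \<omega>. ennreal (- f \<omega>) \<partial>M)"
    by (auto simp: real_integrable_def real_lebesgue_integral_def)
  with fin show ?thesis
    by (simp add: neg_expect_def neg pos f_def[symmetric] enn2ereal_eq_ereal_enn2real)
qed

definition excess_moment :: "'a measure \<Rightarrow> real \<Rightarrow> ('d \<Rightarrow> 'a \<Rightarrow> real) \<Rightarrow> ('a \<Rightarrow> real) \<Rightarrow> 'd \<Rightarrow> real" where
  "excess_moment M r R Z i = (\<integral>\<omega>. Z \<omega> * (R i \<omega> - r) \<partial>M)"

locale condition_I_market =
  fixes M :: "'a measure" and r :: real and R :: "'d::finite \<Rightarrow> 'a \<Rightarrow> real"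
    and Q :: "('a \<Rightarrow> real) set"
  assumes Q_densities: "Q \<subseteq> densities M"
    and Q_convex: "convex_fun_set Q"
    and one_in_Q: "(\<lambda>_. 1) \<in> Q"
    and integrable_Q_ret: "\<And>Z i. Z \<in> Q \<Longrightarrow> integrable M (\<lambda>\<omega>. Z \<omega> * R i \<omega>)"
begin

lemma integrable_Q: "Z \<in> Q \<Longrightarrow> integrable M Z"
  and AE_Q_nonneg: "Z \<in> Q \<Longrightarrow> AE \<omega> in M. Z \<omega> \<ge> 0"
  using Q_densities by (auto simp: densities_def)

lemma integrable_Q_excess_ret:
  assumes "Z \<in> Q"
  shows "integrable M (\<lambda>\<omega>. Z \<omega> * (R i \<omega> - r))"
proof -
  have "integrable M (\<lambda>\<omega>. Z \<omega> * R i \<omega> - r * Z \<omega>)"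
    using integrable_Q_ret[OF assms] integrable_Q[OF assms] by auto
  then show ?thesis
    by (simp add: algebra_simps)
qed

lemma mult_excess_eq_sum: "(\<lambda>\<omega>. Z \<omega> * excess r R \<pi> \<omega>) = (\<lambda>\<omega>. \<Sum>i\<in>UNIV. \<pi> i * (Z \<omega> * (R i \<omega> - r)))"
  by (auto simp: excess_def sum_distrib_left algebra_simps)

lemma integrable_Q_excess: "Z \<in> Q \<Longrightarrow> integrable M (\<lambda>\<omega>. Z \<omega> * excess r R \<pi> \<omega>)"
  unfolding mult_excess_eq_sum by (intro Bochner_Integration.integrable_sum integrable_mult_right integrable_Q_excess_ret)

lemma integral_Q_excess:
  "Z \<in> Q \<Longrightarrow> (\<integral>\<omega>. Z \<omega> * excess r R \<pi> \<omega> \<partial>M) = (\<Sum>i\<in>UNIV. \<pi> i * excess_moment M r R Z i)"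
  unfolding mult_excess_eq_sum excess_moment_def
  by (subst Bochner_Integration.integral_sum) (auto intro: integrable_mult_right integrable_Q_excess_ret)

lemma integral_excess: "integral\<^sup>L M (excess r R \<pi>) = (\<Sum>i\<in>UNIV. \<pi> i * excess_moment M r R (\<lambda>_. 1) i)"
  using integral_Q_excess[OF one_in_Q] by simp

lemma neg_expect_excess:
  "Z \<in> Q \<Longrightarrow> neg_expect M Z (excess r R \<pi>) = ereal (- (\<Sum>i\<in>UNIV. \<pi> i * excess_moment M r R Z i))"
  by (simp add: neg_expect_eq_integral integrable_Q_excess AE_Q_nonneg integral_Q_excess)

lemma rho_excess: "rho M Q (excess r R \<pi>) = (SUP Z\<in>Q. ereal (- (\<Sum>i\<in>UNIV. \<pi> i * excess_moment M r R Z i)))"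
  unfolding rho_def by (rule SUP_cong) (simp_all add: neg_expect_excess)

lemma rho_excess_nonpos:
  assumes "\<And>Z. Z \<in> Q \<Longrightarrow> 0 \<le> (\<Sum>i\<in>UNIV. p i * excess_moment M r R Z i)"
  shows "rho M Q (excess r R p) \<le> 0"
  unfolding rho_excess by (rule SUP_least) (use assms in auto)

lemma neg_mean_le_rho_excess: "ereal (- integral\<^sup>L M (excess r R \<pi>)) \<le> rho M Q (excess r R \<pi>)"
  unfolding rho_excess integral_excess using one_in_Q by (rule SUP_upper2) simp

lemma convex_excess_moments: "convex ((\<lambda>Z. \<chi> i. excess_moment M r R Z i) ` Q)"
proof (rule convexI)
  fix x y and u v :: real
  assume "x \<in> (\<lambda>Z. \<chi> i. excess_moment M r R Z i) ` Q" "y \<in> (\<lambda>Z. \<chi> i. excess_moment M r R Z i) ` Q"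
    and "0 \<le> u" "0 \<le> v" "u + v = 1"
  then obtain Z1 Z2 where "Z1 \<in> Q" "Z2 \<in> Q"
    and x: "x = (\<chi> i. excess_moment M r R Z1 i)" and y: "y = (\<chi> i. excess_moment M r R Z2 i)"
    by blast
  define Z where "Z = (\<lambda>\<omega>. u * Z1 \<omega> + (1 - u) * Z2 \<omega>)"
  have "Z \<in> Q"
    using Q_convex \<open>Z1 \<in> Q\<close> \<open>Z2 \<in> Q\<close> \<open>0 \<le> u\<close> \<open>0 \<le> v\<close> \<open>u + v = 1\<close>
    unfolding convex_fun_set_def Z_def by auto
  have "excess_moment M r R Z i = u * excess_moment M r R Z1 i + v * excess_moment M r R Z2 i" for i
    using integrable_Q_excess_ret[OF \<open>Z1 \<in> Q\<close>, of i] integrable_Q_excess_ret[OF \<open>Z2 \<in> Q\<close>, of i]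
      \<open>u + v = 1\<close>
    by (simp add: excess_moment_def Z_def distrib_right mult.assoc flip: eq_diff_eq')
  then have "u *\<^sub>R x + v *\<^sub>R y = (\<chi> i. excess_moment M r R Z i)"
    by (simp add: x y vec_eq_iff)
  with \<open>Z \<in> Q\<close> show "u *\<^sub>R x + v *\<^sub>R y \<in> (\<lambda>Z. \<chi> i. excess_moment M r R Z i) ` Q"
    by blast
qed

lemma Q_in_emm_iff_excess_moments_zero:
  "Z \<in> Q \<Longrightarrow> Z \<in> emm M r R \<longleftrightarrow> (\<chi> i. excess_moment M r R Z i) = 0"
  using Q_densities integrable_Q_excess_ret
  by (auto simp: emm_def excess_moment_def vec_eq_iff)

lemma exists_portfolio_nonneg_excess_moments:
  assumes "Q \<inter> emm M r R = {}"
  obtains p where "p \<noteq> (\<lambda>_. 0)" "\<And>Z. Z \<in> Q \<Longrightarrow> 0 \<le> (\<Sum>i\<in>UNIV. p i * excess_moment M r R Z i)"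
proof -
  have "0 \<notin> (\<lambda>Z. \<chi> i. excess_moment M r R Z i) ` Q"
    using assms Q_in_emm_iff_excess_moments_zero by auto
  then obtain a where "a \<noteq> 0" "\<forall>x \<in> (\<lambda>Z. \<chi> i. excess_moment M r R Z i) ` Q. 0 \<le> inner a x"
    using separating_hyperplane_set_0[OF convex_excess_moments] by blast
  then show ?thesis
    by (intro that[of "\<lambda>i. a $ i"]) (auto simp: vec_eq_iff fun_eq_iff inner_vec_def)
qed

lemma rho_arbitrage_if_improving_portfolio:
  assumes "0 < integral\<^sup>L M (excess r R p)"
    and "\<And>Z. Z \<in> Q \<Longrightarrow> 0 \<le> (\<Sum>i\<in>UNIV. p i * excess_moment M r R Z i)"
  shows "rho_arbitrage M Q r R"
  unfolding rho_arbitrage_def rho_efficient_def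
proof (intro notI, elim exE conjE)
  fix \<pi>
  define q where "q i = \<pi> i + p i" for i
  have sum_q: "(\<Sum>i\<in>UNIV. q i * excess_moment M r R Z i)
      = (\<Sum>i\<in>UNIV. \<pi> i * excess_moment M r R Z i) + (\<Sum>i\<in>UNIV. p i * excess_moment M r R Z i)" for Z
    by (simp add: q_def distrib_right sum.distrib)
  have "integral\<^sup>L M (excess r R \<pi>) < integral\<^sup>L M (excess r R q)"
    using assms(1) by (simp add: integral_excess sum_q)
  moreover have "rho M Q (excess r R q) \<le> rho M Q (excess r R \<pi>)"
    unfolding rho_excess using assms(2)
    by (intro SUP_mono) (force simp: sum_q)
  moreover assume "\<not> (\<exists>\<pi>'. integral\<^sup>L M (excess r R \<pi>) \<le> integral\<^sup>L M (excess r R \<pi>') \<and>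
      rho M Q (excess r R \<pi>') \<le> rho M Q (excess r R \<pi>) \<and>
      (integral\<^sup>L M (excess r R \<pi>) < integral\<^sup>L M (excess r R \<pi>') \<or>
       rho M Q (excess r R \<pi>') < rho M Q (excess r R \<pi>)))"
  ultimately show False
    by auto
qed

lemma Pi0_rho_if_rho_nonpos:
  assumes "p \<in> Pi0 M r R" and "rho M Q (excess r R p) \<le> 0"
  shows "p \<in> Pi0_rho M Q r R"
proof -
  have "0 \<le> rho M Q (excess r R \<pi>')" if "\<pi>' \<in> Pi0 M r R" for \<pi>'
    using neg_mean_le_rho_excess[of \<pi>'] that by (simp add: Pi0_def zero_ereal_def)
  with assms show ?thesis
    by (auto simp: Pi0_rho_def intro: order.trans order.strict_trans1)
qed

end

theorem proposition4p19:
  fixes M :: "'a measure" and r :: real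
    and S0 :: "'d::finite \<Rightarrow> real" and S1 :: "'d \<Rightarrow> 'a \<Rightarrow> real"
    and Q :: "('a \<Rightarrow> real) set"
  assumes "prob_space M"
    and "r > -1"
    and "\<And>i. S0 i > 0"
    and "\<And>i. S1 i \<in> borel_measurable M"
    and "nonredundant M r S0 S1"
    and "\<And>i. integrable M (ret S0 S1 i)"
    and "\<exists>i. integral\<^sup>L M (ret S0 S1 i) \<noteq> r"
    and "Q \<subseteq> densities M" and "convex_fun_set Q" and "(\<lambda>_. 1) \<in> Q"
    and "Pi0_rho M Q r (ret S0 S1) = {(\<lambda>_. 0)}"
    and "\<And>Z i. Z \<in> Q \<Longrightarrow> integrable M (\<lambda>\<omega>. Z \<omega> * ret S0 S1 i \<omega>)"
    and "Q \<inter> emm M r (ret S0 S1) = {}"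
  shows "rho_arbitrage M Q r (ret S0 S1)"
proof -
  interpret condition_I_market M r "ret S0 S1" Q
    using assms(8-10,12) by unfold_locales
  obtain p where "p \<noteq> (\<lambda>_. 0)"
    and p_nonneg: "\<And>Z. Z \<in> Q \<Longrightarrow> 0 \<le> (\<Sum>i\<in>UNIV. p i * excess_moment M r (ret S0 S1) Z i)"
    using exists_portfolio_nonneg_excess_moments[OF assms(13)] by blast
  have "p \<notin> Pi0_rho M Q r (ret S0 S1)"
    using assms(11) \<open>p \<noteq> (\<lambda>_. 0)\<close> by blast
  then have "integral\<^sup>L M (excess r (ret S0 S1) p) \<noteq> 0"
    using Pi0_rho_if_rho_nonpos rho_excess_nonpos[OF p_nonneg] by (auto simp: Pi0_def)
  moreover have "0 \<le> integral\<^sup>L M (excess r (ret S0 S1) p)"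
    using p_nonneg[OF one_in_Q] by (simp add: integral_excess)
  ultimately have "0 < integral\<^sup>L M (excess r (ret S0 S1) p)"
    by linarith
  then show ?thesis
    using rho_arbitrage_if_improving_portfolio p_nonneg by blast
qed

end
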